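(* Let $N$ be a plain structural conflict Petri net. If $N$ has a fully reachable pure $\mathsf M$, then $N$ is not distributable up to step failures equivalence, i.e. there is no distributed Petri net $D$ with $D\approx_{\mathscr F}N$.
   Context: Fix a set $\mathrm{Act}$ of visible actions and an invisible action $\tau\notin\mathrm{Act}$. A (labelled) Petri net is $N=(S,T,F,M_0,\ell)$ with $S,T$ disjoint, $F:(S\times T)\cup(T\times S)\to\mathbb N$, $M_0\in\mathbb N^S$, $\ell:T\to\mathrm{Act}\cup\{\tau\}$. ${}^\bullet x(y)=F(y,x)$, $x^\bullet(y)=F(x,y)$, extended additively to finite multisets; multiset $\le,\cap,\cup$ pointwise $\le$, min, max. For finite nonempty multiset $G$ of transitions, $M[G\rangle M'$ iff ${}^\bullet G\le M$ and $M'=M-{}^\bullet G+G^\bullet$. Reachable markings: closure of $\{M_0\}$ under steps. $t\smile u$ iff $M[\{t\}+\{u\}\rangle$ for a reachable $M$. Structural conflict net: $t\smile u\Rightarrow{}^\bullet t\cap{}^\bullet u=\emptyset$. Plain: $\ell$ injective and never $\tau$. Fully reachable pure $\mathsf M$: $t,u,v\in T$ with ${}^\bullet t\cap{}^\bullet u\neq\emptyset$, ${}^\bullet u\cap{}^\bullet v\neq\emptyset$, ${}^\bullet t\cap{}^\bullet v=\emptyset$, and a reachable $M$ with ${}^\bullet t\cup{}^\bullet u\cup{}^\bullet v\le M$. Distributed net: there is a function $D$ on $S\cup T$ with (1) $s\in{}^\bullet t\Rightarrow D(t)=D(s)$, (2) $t\smile u\Rightarrow D(t)\neq D(u)$. Step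 failures equivalence: $M\xrightarrow{\alpha}M'$ iff $M[t\rangle M'$ with $\ell(t)=\alpha$; $\Rightarrow$ is the reflexive transitive closure of $\xrightarrow{\tau}$; $M\overset{a_1\cdots a_n}{\Longrightarrow}M'$ iff $M\Rightarrow\xrightarrow{a_1}\Rightarrow\cdots\xrightarrow{a_n}\Rightarrow M'$. For a step $A$ (finite nonempty multiset over $\mathrm{Act}$), $M\xrightarrow{A}$ iff $M[G\rangle$ for a finite multiset $G$ of transitions, none labelled $\tau$, whose label multiset is $A$. $(\sigma,X)$, $\sigma\in\mathrm{Act}^*$, $X$ a finite set of steps, is a step failure pair iff some $M$ has $M_0\overset{\sigma}{\Longrightarrow}M$, $M\not\xrightarrow{\tau}$, and $M\not\xrightarrow{A}$ for all $A\in X$. $N_1\approx_{\mathscr F}N_2$ iff they have the same step failure pairs. *)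

theory Defs
  imports Main "HOL-Library.Multiset"
begin

datatype 'a label = Vis 'a | Tau

text \<open>S and T are disjoint since they live in different types.  Markings are functions
  's \<Rightarrow> nat (multisets over places, pointwise order/min/max = le/inf/sup).\<close>
record ('s, 't, 'a) petri_net =
  places :: "'s set"
  transitions :: "'t set"
  flow_st :: "'s \<Rightarrow> 't \<Rightarrow> nat"
  flow_ts :: "'t \<Rightarrow> 's \<Rightarrow> nat"
  initial :: "'s \<Rightarrow> nat"
  label :: "'t \<Rightarrow> 'a label"

definition wf_net :: "('s, 't, 'a) petri_net \<Rightarrow> bool" where
  "wf_net N \<longleftrightarrow>
     (\<forall>s t. (s \<notin> places N \<or> t \<notin> transitions N) \<longrightarrow> flow_st N s t = 0 \<and> flow_ts N t s = 0) \<and>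
     (\<forall>s. s \<notin> places N \<longrightarrow> initial N s = 0)"

definition pre_t :: "('s, 't, 'a) petri_net \<Rightarrow> 't \<Rightarrow> 's \<Rightarrow> nat" where
  "pre_t N t = (\<lambda>s. flow_st N s t)"

definition pre :: "('s, 't, 'a) petri_net \<Rightarrow> 't multiset \<Rightarrow> 's \<Rightarrow> nat" where
  "pre N G = (\<lambda>s. sum_mset (image_mset (\<lambda>t. flow_st N s t) G))"

definition post :: "('s, 't, 'a) petri_net \<Rightarrow> 't multiset \<Rightarrow> 's \<Rightarrow> nat" where
  "post N G = (\<lambda>s. sum_mset (image_mset (\<lambda>t. flow_ts N t s) G))"

definition fires :: "('s, 't, 'a) petri_net \<Rightarrow> ('s \<Rightarrow> nat) \<Rightarrow> 't multiset \<Rightarrow> ('s \<Rightarrow> nat) \<Rightarrow> bool" where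
  "fires N M G M' \<longleftrightarrow> G \<noteq> {#} \<and> set_mset G \<subseteq> transitions N \<and> pre N G \<le> M \<and>
     M' = (\<lambda>s. M s - pre N G s + post N G s)"

definition enabled :: "('s, 't, 'a) petri_net \<Rightarrow> ('s \<Rightarrow> nat) \<Rightarrow> 't multiset \<Rightarrow> bool" where
  "enabled N M G \<longleftrightarrow> (\<exists>M'. fires N M G M')"

inductive reachable :: "('s, 't, 'a) petri_net \<Rightarrow> ('s \<Rightarrow> nat) \<Rightarrow> bool" for N where
  init: "reachable N (initial N)"
| step: "reachable N M \<Longrightarrow> fires N M G M' \<Longrightarrow> reachable N M'"

definition concurrent :: "('s, 't, 'a) petri_net \<Rightarrow> 't \<Rightarrow> 't \<Rightarrow> bool" where
  "concurrent N t u \<longleftrightarrow> (\<exists>M. reachable N M \<and> enabled N M ({#t#} + {#u#}))"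

definition sc_net :: "('s, 't, 'a) petri_net \<Rightarrow> bool" where
  "sc_net N \<longleftrightarrow> (\<forall>t\<in>transitions N. \<forall>u\<in>transitions N.
     concurrent N t u \<longrightarrow> inf (pre_t N t) (pre_t N u) = (\<lambda>_. 0))"

definition plain :: "('s, 't, 'a) petri_net \<Rightarrow> bool" where
  "plain N \<longleftrightarrow> inj_on (label N) (transitions N) \<and> (\<forall>t\<in>transitions N. label N t \<noteq> Tau)"

definition has_pure_M :: "('s, 't, 'a) petri_net \<Rightarrow> bool" where
  "has_pure_M N \<longleftrightarrow> (\<exists>t\<in>transitions N. \<exists>u\<in>transitions N. \<exists>v\<in>transitions N.
     inf (pre_t N t) (pre_t N u) \<noteq> (\<lambda>_. 0) \<and>
     inf (pre_t N u) (pre_t N v) \<noteq> (\<lambda>_. 0) \<and>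
     inf (pre_t N t) (pre_t N v) = (\<lambda>_. 0) \<and>
     (\<exists>M. reachable N M \<and> sup (sup (pre_t N t) (pre_t N u)) (pre_t N v) \<le> M))"

text \<open>Distributed net: a function D on S \<union> T (codomain S + T suffices, since only the
  induced partition matters).\<close>
definition distributed :: "('s, 't, 'a) petri_net \<Rightarrow> bool" where
  "distributed N \<longleftrightarrow> (\<exists>D :: 's + 't \<Rightarrow> 's + 't.
     (\<forall>s\<in>places N. \<forall>t\<in>transitions N. flow_st N s t > 0 \<longrightarrow> D (Inr t) = D (Inl s)) \<and>
     (\<forall>t\<in>transitions N. \<forall>u\<in>transitions N. concurrent N t u \<longrightarrow> D (Inr t) \<noteq> D (Inr u)))"

definition lstep :: "('s, 't, 'a) petri_net \<Rightarrow> ('s \<Rightarrow> nat) \<Rightarrow> 'a label \<Rightarrow> ('s \<Rightarrow> nat) \<Rightarrow> bool" where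
  "lstep N M \<alpha> M' \<longleftrightarrow> (\<exists>t\<in>transitions N. label N t = \<alpha> \<and> fires N M {#t#} M')"

definition tau_star :: "('s, 't, 'a) petri_net \<Rightarrow> ('s \<Rightarrow> nat) \<Rightarrow> ('s \<Rightarrow> nat) \<Rightarrow> bool" where
  "tau_star N = (\<lambda>M M'. lstep N M Tau M')\<^sup>*\<^sup>*"

fun wtrace :: "('s, 't, 'a) petri_net \<Rightarrow> ('s \<Rightarrow> nat) \<Rightarrow> 'a list \<Rightarrow> ('s \<Rightarrow> nat) \<Rightarrow> bool" where
  "wtrace N M [] M' \<longleftrightarrow> tau_star N M M'"
| "wtrace N M (a # \<sigma>) M' \<longleftrightarrow>
     (\<exists>M1 M2. tau_star N M M1 \<and> lstep N M1 (Vis a) M2 \<and> wtrace N M2 \<sigma> M')"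

definition step_enabled :: "('s, 't, 'a) petri_net \<Rightarrow> ('s \<Rightarrow> nat) \<Rightarrow> 'a multiset \<Rightarrow> bool" where
  "step_enabled N M A \<longleftrightarrow>
     (\<exists>G. (\<forall>t\<in>#G. label N t \<noteq> Tau) \<and> image_mset (label N) G = image_mset Vis A \<and> enabled N M G)"

definition step_failure_pair :: "('s, 't, 'a) petri_net \<Rightarrow> 'a list \<Rightarrow> 'a multiset set \<Rightarrow> bool" where
  "step_failure_pair N \<sigma> X \<longleftrightarrow> finite X \<and> (\<forall>A\<in>X. A \<noteq> {#}) \<and>
     (\<exists>M. wtrace N (initial N) \<sigma> M \<and> \<not> (\<exists>M'. lstep N M Tau M') \<and>
          (\<forall>A\<in>X. \<not> step_enabled N M A))"

definition sf_equiv :: "('s1, 't1, 'a) petri_net \<Rightarrow> ('s2, 't2, 'a) petri_net \<Rightarrow> bool" where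
  "sf_equiv N1 N2 \<longleftrightarrow> (\<forall>\<sigma> X. step_failure_pair N1 \<sigma> X \<longleftrightarrow> step_failure_pair N2 \<sigma> X)"

end

theory Submission
  imports Defs
begin

text \<open>
  At a reachable marking enabling the three transitions t, u, v of the pure M, the plain
  structural conflict net N can fire the step {a, c} and the action b, but neither of the
  steps {a, b}, {b, c}.  Since N is deterministic, step failures equivalence forces every
  equivalent net D to reach, after the same trace, a marking with exactly these properties.
  In a distributed net this is impossible: the transitions t' and v' firing {a, c} concurrently
  lie in different components, so the transition u' firing b lies in a different component
  from one of them; since transitions only consume tokens from places of their own component,
  u' can fire concurrently with that one, yielding the step {a, b} or {b, c}.
\<close>

lemma image_mset_eq_singletonD:
  assumes "image_mset f G = {#x#}"
  obtains p where "G = {#p#}" and "f p = x"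
  using assms by (auto dest!: msed_map_invR[of f G x "{#}"])

lemma image_mset_eq_doubletonD:
  assumes "image_mset f G = {#x, y#}"
  obtains p q where "G = {#p, q#}" and "f p = x" and "f q = y"
proof -
  from msed_map_invR[of f G x "{#y#}"] assms obtain G' p
    where "G = add_mset p G'" "f p = x" "image_mset f G' = {#y#}" by auto
  with image_mset_eq_singletonD[of f G' y] that show thesis by metis
qed

lemma pre_union: "pre N (G + H) s = pre N G s + pre N H s"
  by (simp add: pre_def)

lemma post_union: "post N (G + H) s = post N G s + post N H s"
  by (simp add: post_def)

lemma pre_singleton [simp]: "pre N {#t#} s = flow_st N s t"
  by (simp add: pre_def)

lemma pre_doubleton [simp]: "pre N {#p, q#} s = flow_st N s p + flow_st N s q"
  by (simp add: pre_def)

lemma fires_union_split: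
  assumes "fires N M (G + H) M'" and "G \<noteq> {#}" and "H \<noteq> {#}"
  shows "\<exists>M1. fires N M G M1 \<and> fires N M1 H M'"
proof -
  have le: "pre N G s + pre N H s \<le> M s" for s
    using assms(1) by (auto simp: fires_def le_fun_def pre_union)
  have M': "M' s = M s - (pre N G s + pre N H s) + (post N G s + post N H s)" for s
    using assms(1) by (simp add: fires_def pre_union post_union)
  let ?M1 = "\<lambda>s. M s - pre N G s + post N G s"
  have "fires N M G ?M1"
    using assms(1,2) le by (auto simp: fires_def le_fun_def intro: le_trans[OF le_add1])
  moreover have "fires N ?M1 H M'"
    unfolding fires_def
  proof (intro conjI ext)
    show "set_mset H \<subseteq> transitions N"
      using assms(1) by (auto simp: fires_def)
    show "pre N H \<le> ?M1"
      using le by (auto simp: le_fun_def) (metis add.commute le_diff_conv2 le_add2 trans_le_add1 le_trans)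
    show "M' s = ?M1 s - pre N H s + post N H s" for s
      using M'[of s] le[of s] by linarith
  qed (use assms(3) in simp)
  ultimately show ?thesis by blast
qed

lemma enabled_iff:
  "enabled N M G \<longleftrightarrow> G \<noteq> {#} \<and> set_mset G \<subseteq> transitions N \<and> pre N G \<le> M"
  by (simp add: enabled_def fires_def)

lemma enabled_doubleton_iff:
  "enabled N M {#p, q#} \<longleftrightarrow>
     p \<in> transitions N \<and> q \<in> transitions N \<and> (\<forall>s. flow_st N s p + flow_st N s q \<le> M s)"
  by (simp add: enabled_iff le_fun_def)

lemma enabled_singleton_iff:
  "enabled N M {#p#} \<longleftrightarrow> p \<in> transitions N \<and> (\<forall>s. flow_st N s p \<le> M s)"
  by (simp add: enabled_iff le_fun_def)

lemma enabled_doubleton_imp_concurrent: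
  "reachable N M \<Longrightarrow> enabled N M {#p, q#} \<Longrightarrow> concurrent N p q"
  unfolding concurrent_def by (metis add_mset_add_single add_mset_commute)

lemma step_enabledI:
  assumes "enabled N M G" and "image_mset (label N) G = image_mset Vis A"
  shows "step_enabled N M A"
proof -
  have "label N t \<noteq> Tau" if "t \<in># G" for t
  proof -
    from that have "label N t \<in># image_mset Vis A"
      by (metis assms(2) image_eqI set_image_mset)
    then show ?thesis by auto
  qed
  with assms show ?thesis
    unfolding step_enabled_def by blast
qed

lemma step_enabled_singletonE:
  assumes "step_enabled N M {#a#}"
  obtains p where "enabled N M {#p#}" and "label N p = Vis a"
proof -
  from assms obtain G where G: "image_mset (label N) G = {#Vis a#}" "enabled N M G"
    unfolding step_enabled_def by auto
  from G(1) obtain p where "G = {#p#}" "label N p = Vis a"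
    by (rule image_mset_eq_singletonD)
  with G(2) that show thesis by simp
qed

lemma step_enabled_doubletonE:
  assumes "step_enabled N M {#a, b#}"
  obtains p q where "enabled N M {#p, q#}" and "label N p = Vis a" and "label N q = Vis b"
proof -
  from assms obtain G where G: "image_mset (label N) G = {#Vis a, Vis b#}" "enabled N M G"
    unfolding step_enabled_def by auto
  from G(1) obtain p q where "G = {#p, q#}" "label N p = Vis a" "label N q = Vis b"
    by (rule image_mset_eq_doubletonD)
  with G(2) that show thesis by simp
qed

lemma wtrace_append:
  "wtrace N M \<sigma> M1 \<Longrightarrow> wtrace N M1 \<rho> M2 \<Longrightarrow> wtrace N M (\<sigma> @ \<rho>) M2"
proof (induction \<sigma> arbitrary: M)
  case Nil
  then show ?case
    by (cases \<rho>) (auto simp: tau_star_def intro: rtranclp_trans)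
next
  case (Cons a \<sigma>)
  then show ?case by auto
qed

lemma fires_imp_wtrace:
  assumes "\<forall>t\<in>transitions N. label N t \<noteq> Tau"
  shows "fires N M G M' \<Longrightarrow> \<exists>\<sigma>. wtrace N M \<sigma> M'"
proof (induction G arbitrary: M)
  case empty
  then show ?case by (simp add: fires_def)
next
  case (add t G)
  have "t \<in> transitions N"
    using add.prems by (simp add: fires_def)
  then obtain a where a: "label N t = Vis a"
    using assms by (cases "label N t") auto
  have single: "wtrace N M [a] M1" if "fires N M {#t#} M1" for M1
    using that \<open>t \<in> transitions N\<close> a by (auto simp: lstep_def tau_star_def)
  show ?case
  proof (cases "G = {#}")
    case True
    then have "wtrace N M [a] M'"
      using single add.prems by simp
    then show ?thesis by blast
  next
    case False
    with fires_union_split[of N M "{#t#}" G M'] add.prems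
    obtain M1 where "fires N M {#t#} M1" "fires N M1 G M'" by auto
    with single add.IH show ?thesis by (metis append_Cons append_Nil wtrace_append)
  qed
qed

lemma reachable_imp_wtrace:
  assumes "\<forall>t\<in>transitions N. label N t \<noteq> Tau"
  shows "reachable N M \<Longrightarrow> \<exists>\<sigma>. wtrace N (initial N) \<sigma> M"
proof (induction rule: reachable.induct)
  case init
  have "wtrace N (initial N) [] (initial N)" by (simp add: tau_star_def)
  then show ?case by blast
next
  case (step M G M')
  then show ?case
    using fires_imp_wtrace[OF assms] wtrace_append by blast
qed

lemma tau_star_reachable: "tau_star N M M' \<Longrightarrow> reachable N M \<Longrightarrow> reachable N M'"
  unfolding tau_star_def
  by (induction rule: rtranclp_induct) (auto simp: lstep_def intro: reachable.step)

lemma wtrace_reachable: "wtrace N M \<sigma> M' \<Longrightarrow> reachable N M \<Longrightarrow> reachable N M'"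
proof (induction \<sigma> arbitrary: M)
  case Nil
  then show ?case using tau_star_reachable by auto
next
  case (Cons a \<sigma>)
  then obtain M1 M2 where "tau_star N M M1" "lstep N M1 (Vis a) M2" "wtrace N M2 \<sigma> M'"
    by auto
  with Cons show ?case
    by (meson lstep_def reachable.step tau_star_reachable)
qed

lemma plain_no_tau_step: "plain N \<Longrightarrow> \<not> lstep N M Tau M'"
  by (auto simp: plain_def lstep_def)

lemma plain_tau_star_eq: "plain N \<Longrightarrow> tau_star N M M' \<Longrightarrow> M' = M"
  unfolding tau_star_def
  by (erule converse_rtranclpE) (auto dest: plain_no_tau_step)

lemma fires_deterministic: "fires N M G M1 \<Longrightarrow> fires N M G M2 \<Longrightarrow> M1 = M2"
  by (simp add: fires_def)

lemma plain_lstep_deterministic: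
  assumes "plain N" and "lstep N M \<alpha> M1" and "lstep N M \<alpha> M2"
  shows "M1 = M2"
proof -
  from assms(2,3) obtain t1 t2 where
    "t1 \<in> transitions N" "label N t1 = \<alpha>" "fires N M {#t1#} M1"
    "t2 \<in> transitions N" "label N t2 = \<alpha>" "fires N M {#t2#} M2"
    unfolding lstep_def by blast
  moreover from calculation have "t1 = t2"
    using assms(1) unfolding plain_def by (metis inj_onD)
  ultimately show ?thesis by (simp add: fires_deterministic)
qed

lemma plain_wtrace_deterministic:
  assumes "plain N"
  shows "wtrace N M \<sigma> M1 \<Longrightarrow> wtrace N M \<sigma> M2 \<Longrightarrow> M1 = M2"
proof (induction \<sigma> arbitrary: M)
  case Nil
  then show ?case using plain_tau_star_eq[OF assms] by auto
next
  case (Cons a \<sigma>)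
  from Cons.prems obtain X Y X' Y' where
    "tau_star N M X" "lstep N X (Vis a) Y" "wtrace N Y \<sigma> M1"
    "tau_star N M X'" "lstep N X' (Vis a) Y'" "wtrace N Y' \<sigma> M2"
    by auto
  moreover from calculation have "X = M" "X' = M"
    using plain_tau_star_eq[OF assms] by auto
  ultimately have "Y = Y'" "wtrace N Y \<sigma> M1" "wtrace N Y \<sigma> M2"
    using plain_lstep_deterministic[OF assms] by auto
  then show ?case using Cons.IH by blast
qed

lemma plain_step_enabled_doubleton_imp_enabled:
  assumes "plain N" "p \<in> transitions N" "q \<in> transitions N"
    and "label N p = Vis a" "label N q = Vis b" "step_enabled N M {#a, b#}"
  shows "enabled N M {#p, q#}"
proof -
  from assms(6) obtain p' q' where en: "enabled N M {#p', q'#}"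
    and "label N p' = Vis a" "label N q' = Vis b"
    by (rule step_enabled_doubletonE)
  moreover from en have "p' \<in> transitions N" "q' \<in> transitions N"
    by (simp_all add: enabled_doubleton_iff)
  ultimately have "p' = p" "q' = q"
    using assms unfolding plain_def by (metis inj_onD)+
  with en show ?thesis by simp
qed

lemma plain_sc_net_refuses_conflicting_step:
  assumes "plain N" and "sc_net N" and "reachable N M"
    and "p \<in> transitions N" "q \<in> transitions N"
    and "label N p = Vis a" "label N q = Vis b"
    and "inf (pre_t N p) (pre_t N q) \<noteq> (\<lambda>_. 0)"
  shows "\<not> step_enabled N M {#a, b#}"
proof
  assume "step_enabled N M {#a, b#}"
  then have "enabled N M {#p, q#}"
    using plain_step_enabled_doubleton_imp_enabled[OF assms(1,4-7)] by blast
  then have "concurrent N p q"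
    by (rule enabled_doubleton_imp_concurrent[OF assms(3)])
  with assms(2,4,5,8) show False
    unfolding sc_net_def by blast
qed

lemma plain_sc_net_pure_M_marking:
  assumes "plain N" and "sc_net N" and "has_pure_M N"
  obtains \<sigma> M a b c where "wtrace N (initial N) \<sigma> M"
    and "\<not> step_enabled N M {#a, b#}" and "\<not> step_enabled N M {#b, c#}"
    and "step_enabled N M {#a, c#}" and "step_enabled N M {#b#}"
proof -
  have visible: "\<forall>t\<in>transitions N. label N t \<noteq> Tau"
    using assms(1) by (simp add: plain_def)
  from assms(3) obtain t u v M
    where T: "t \<in> transitions N" "u \<in> transitions N" "v \<in> transitions N"
      and tu: "inf (pre_t N t) (pre_t N u) \<noteq> (\<lambda>_. 0)"
      and uv: "inf (pre_t N u) (pre_t N v) \<noteq> (\<lambda>_. 0)"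
      and tv: "inf (pre_t N t) (pre_t N v) = (\<lambda>_. 0)"
      and M: "reachable N M" "sup (sup (pre_t N t) (pre_t N u)) (pre_t N v) \<le> M"
    unfolding has_pure_M_def by blast
  obtain a b c where lab: "label N t = Vis a" "label N u = Vis b" "label N v = Vis c"
    using visible T by (metis label.exhaust)
  obtain \<sigma> where "wtrace N (initial N) \<sigma> M"
    using reachable_imp_wtrace[OF visible M(1)] by blast
  moreover have "\<not> step_enabled N M {#a, b#}" "\<not> step_enabled N M {#b, c#}"
    using plain_sc_net_refuses_conflicting_step[OF assms(1,2) M(1)] T lab tu uv by blast+
  moreover have "enabled N M {#t, v#}" "enabled N M {#u#}"
  proof -
    have le: "flow_st N s t \<le> M s" "flow_st N s u \<le> M s" "flow_st N s v \<le> M s" for s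
      using M(2) by (auto simp: le_fun_def pre_t_def)
    have "flow_st N s t + flow_st N s v \<le> M s" for s
    proof -
      have "min (flow_st N s t) (flow_st N s v) = 0"
        using fun_cong[OF tv, of s] by (simp add: pre_t_def inf_nat_def)
      with le(1,3)[of s] show ?thesis by linarith
    qed
    then show "enabled N M {#t, v#}" "enabled N M {#u#}"
      using T le by (simp_all add: enabled_doubleton_iff enabled_singleton_iff)
  qed
  then have "step_enabled N M {#a, c#}" "step_enabled N M {#b#}"
    using lab by (auto intro: step_enabledI)
  ultimately show thesis using that by blast
qed

text \<open>
  Because the trace \<sigma> leads to a unique marking of a plain net, any step A enabled there
  can be added to the refusal set of a failure pair of D only at the price of a failure pair
  that N does not have; hence a single marking of D both refuses X and enables all such A.
\<close>

lemma sf_equiv_plain_matching_marking: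
  assumes "sf_equiv D N" and "plain N" and "wtrace N (initial N) \<sigma> M"
    and "finite X" and "\<forall>A\<in>X. A \<noteq> {#}" and "\<forall>A\<in>X. \<not> step_enabled N M A"
  obtains MD where "wtrace D (initial D) \<sigma> MD"
    and "\<forall>A\<in>X. \<not> step_enabled D MD A"
    and "\<And>A. A \<noteq> {#} \<Longrightarrow> step_enabled N M A \<Longrightarrow> step_enabled D MD A"
proof -
  have equiv: "step_failure_pair D \<sigma> Y \<longleftrightarrow> step_failure_pair N \<sigma> Y" for Y
    using assms(1) unfolding sf_equiv_def by simp
  have "step_failure_pair N \<sigma> X"
    unfolding step_failure_pair_def
    using assms(3-6) plain_no_tau_step[OF assms(2)] by auto
  then have "step_failure_pair D \<sigma> X"
    by (simp add: equiv)
  then obtain MD where MD: "wtrace D (initial D) \<sigma> MD"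
      "\<not> (\<exists>M'. lstep D MD Tau M')" "\<forall>A\<in>X. \<not> step_enabled D MD A"
    unfolding step_failure_pair_def by auto
  have "step_enabled D MD A" if "A \<noteq> {#}" "step_enabled N M A" for A
  proof (rule ccontr)
    assume "\<not> step_enabled D MD A"
    with MD that(1) assms(4,5) have "step_failure_pair D \<sigma> (insert A X)"
      unfolding step_failure_pair_def by auto
    then have "step_failure_pair N \<sigma> (insert A X)"
      by (simp add: equiv)
    then obtain M' where "wtrace N (initial N) \<sigma> M'" "\<not> step_enabled N M' A"
      unfolding step_failure_pair_def by auto
    with plain_wtrace_deterministic[OF assms(2) assms(3)] that(2) show False by simp
  qed
  with MD that show thesis by simp
qed

lemma distributed_enabled_doubleton:
  assumes "wf_net D"
    and comp: "\<forall>s\<in>places D. \<forall>t\<in>transitions D. flow_st D s t > 0 \<longrightarrow> f (Inr t) = f (Inl s)"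
    and "f (Inr p) \<noteq> f (Inr q)" and "enabled D M {#p#}" and "enabled D M {#q#}"
  shows "enabled D M {#p, q#}"
  unfolding enabled_doubleton_iff
proof (intro conjI allI)
  show "p \<in> transitions D" "q \<in> transitions D"
    using assms(4,5) by (simp_all add: enabled_singleton_iff)
  fix s
  have "flow_st D s p = 0 \<or> flow_st D s q = 0"
  proof (rule ccontr)
    assume "\<not> ?thesis"
    moreover from this have "s \<in> places D"
      using assms(1) unfolding wf_net_def by blast
    ultimately show False
      using comp assms(3) \<open>p \<in> transitions D\<close> \<open>q \<in> transitions D\<close> by auto
  qed
  then show "flow_st D s p + flow_st D s q \<le> M s"
    using assms(4,5) by (auto simp: enabled_singleton_iff)
qed

lemma distributed_step_enabled_extend:
  fixes D :: "('s, 't, 'a) petri_net"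
  assumes "wf_net D" and "distributed D" and "reachable D M"
    and "step_enabled D M {#a, c#}" and "step_enabled D M {#b#}"
  shows "step_enabled D M {#a, b#} \<or> step_enabled D M {#b, c#}"
proof -
  from assms(2) obtain f :: "'s + 't \<Rightarrow> 's + 't" where
    comp: "\<forall>s\<in>places D. \<forall>t\<in>transitions D. flow_st D s t > 0 \<longrightarrow> f (Inr t) = f (Inl s)"
    and conc: "\<forall>t\<in>transitions D. \<forall>u\<in>transitions D. concurrent D t u \<longrightarrow> f (Inr t) \<noteq> f (Inr u)"
    unfolding distributed_def by blast
  from assms(4) obtain p r where pr: "enabled D M {#p, r#}"
    and lab_pr: "label D p = Vis a" "label D r = Vis c"
    by (rule step_enabled_doubletonE)
  from assms(5) obtain q where q: "enabled D M {#q#}" and lab_q: "label D q = Vis b"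
    by (rule step_enabled_singletonE)
  have p: "enabled D M {#p#}" and r: "enabled D M {#r#}"
    using pr unfolding enabled_doubleton_iff enabled_singleton_iff by (meson add_leD1 add_leD2)+
  have "f (Inr p) \<noteq> f (Inr r)"
    using conc enabled_doubleton_imp_concurrent[OF assms(3) pr] pr
    by (simp add: enabled_doubleton_iff)
  then consider "f (Inr p) \<noteq> f (Inr q)" | "f (Inr q) \<noteq> f (Inr r)" by metis
  then show ?thesis
  proof cases
    case 1
    then have "enabled D M {#p, q#}"
      using distributed_enabled_doubleton[OF assms(1) comp _ p q] by blast
    then show ?thesis using lab_pr lab_q by (auto intro: step_enabledI)
  next
    case 2
    then have "enabled D M {#q, r#}"
      using distributed_enabled_doubleton[OF assms(1) comp _ q r] by blast
    then show ?thesis using lab_pr lab_q by (auto intro: step_enabledI)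
  qed
qed

theorem theorem5p6:
  fixes N :: "('s, 't, 'a) petri_net" and D :: "('s2, 't2, 'a) petri_net"
  assumes "wf_net N" and "plain N" and "sc_net N" and "has_pure_M N"
    and "wf_net D" and "distributed D"
  shows "\<not> sf_equiv D N"
proof
  assume equiv: "sf_equiv D N"
  obtain \<sigma> M a b c where M: "wtrace N (initial N) \<sigma> M"
    and refuse: "\<not> step_enabled N M {#a, b#}" "\<not> step_enabled N M {#b, c#}"
    and enable: "step_enabled N M {#a, c#}" "step_enabled N M {#b#}"
    using plain_sc_net_pure_M_marking[OF assms(2-4)] by blast
  obtain MD where MD: "wtrace D (initial D) \<sigma> MD"
    and refuseD: "\<forall>A\<in>{{#a, b#}, {#b, c#}}. \<not> step_enabled D MD A"
    and enableD: "\<And>A. A \<noteq> {#} \<Longrightarrow> step_enabled N M A \<Longrightarrow> step_enabled D MD A"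
    using sf_equiv_plain_matching_marking[OF equiv assms(2) M, of "{{#a, b#}, {#b, c#}}"] refuse
    by auto
  have "reachable D MD"
    using wtrace_reachable[OF MD reachable.init] .
  moreover have "step_enabled D MD {#a, c#}" "step_enabled D MD {#b#}"
    using enableD enable by simp_all
  ultimately have "step_enabled D MD {#a, b#} \<or> step_enabled D MD {#b, c#}"
    using distributed_step_enabled_extend[OF assms(5,6)] by blast
  with refuseD show False by simp
qed

end
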